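(* Let $\beta\ge 1$ and let $\overline R$ and $R$ be two consecutive $\beta$-bounded $T$-coverings (i.e. the initial state of $R$ equals the final state of $\overline R$) in a congestion game in which every delay function is $f(x)=x$, and assume $\mathrm{OPT}>0$. Then $$\frac{\rho(R)}{\mathrm{OPT}}\le 2\sqrt{2\,\frac{\rho(\overline R)}{\mathrm{OPT}}}+4\beta+1.$$
   Context: A congestion game has players $N=\{1,\dots,n\}$, a finite resource set $E$ and strategy sets $\Sigma_i\subseteq 2^E$. For a profile $S=(s_1,\dots,s_n)$, $n_e(S)=|\{i: e\in s_i\}|$. Here all delays are $f(x)=x$, so the cost of player $i$ is $c_i(S)=\sum_{e\in s_i}n_e(S)$ and the social cost is $C(S)=\sum_i c_i(S)=\sum_{e\in E}n_e(S)^2$. Fix an optimal profile $S^*=(s_1^*,\dots,s_n^* )$ minimizing $C$ and write $\mathrm{OPT}=C(S^* )$. A best response of player $i$ in $S$ is a strategy $s_i^b\in\Sigma_i$ minimizing $c_i(S_{-i},\cdot)$ over $\Sigma_i$ (where $(S_{-i},s_i')$ replaces $s_i$ by $s_i'$); if no strategy strictly decreases $i$'s cost, the best response is $s_i$ itself. A $T$-covering is a sequence of profiles $R=(S^0,\dots,S^T)$ together with players $\pi(1),\dots,\pi(T)$ such that for each $1\le t\le T$, $S^t=(S^{t-1}_{-\pi(t)},s')$ where $s'$ is a best response of $\pi(t)$ in $S^{t-1}$, and every player of $N$ occurs at least once among $\pi(1),\dots,\pi(T)$. It is $\beta$-bounded if every player occurs at most $\beta$ times among $\pi(1),\dots,\pi(T)$.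 For each player $i$, $\mathrm{last}_R(i)=\max\{t:\pi(t)=i\}$. Define $\rho(R)=\sum_{i=1}^n\sum_{e\in s_i^*}\bigl(n_e(S^{\mathrm{last}_R(i)-1})+1\bigr)$, where $S^t$ are the states of $R$. *)

theory Defs
  imports Complex_Main
begin

text \<open>Congestion games with linear delays f(x) = x. A profile is a
  function from players to sets of resources (only its values on N matter).\<close>

definition load :: "'p set \<Rightarrow> ('p \<Rightarrow> 'e set) \<Rightarrow> 'e \<Rightarrow> nat" where
  "load N S e = card {i \<in> N. e \<in> S i}"

definition pcost :: "'p set \<Rightarrow> ('p \<Rightarrow> 'e set) \<Rightarrow> 'p \<Rightarrow> nat" where
  "pcost N S i = (\<Sum>e\<in>S i. load N S e)"

definition social_cost :: "'p set \<Rightarrow> ('p \<Rightarrow> 'e set) \<Rightarrow> nat" where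
  "social_cost N S = (\<Sum>i\<in>N. pcost N S i)"

definition congestion_game :: "'p set \<Rightarrow> 'e set \<Rightarrow> ('p \<Rightarrow> 'e set set) \<Rightarrow> bool" where
  "congestion_game N E Sig \<longleftrightarrow> finite N \<and> finite E \<and>
     (\<forall>i\<in>N. Sig i \<subseteq> Pow E \<and> Sig i \<noteq> {})"

definition valid_profile :: "'p set \<Rightarrow> ('p \<Rightarrow> 'e set set) \<Rightarrow> ('p \<Rightarrow> 'e set) \<Rightarrow> bool" where
  "valid_profile N Sig S \<longleftrightarrow> (\<forall>i\<in>N. S i \<in> Sig i)"

definition optimal_profile :: "'p set \<Rightarrow> ('p \<Rightarrow> 'e set set) \<Rightarrow> ('p \<Rightarrow> 'e set) \<Rightarrow> bool" where
  "optimal_profile N Sig Sopt \<longleftrightarrow> valid_profile N Sig Sopt \<and>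
     (\<forall>S. valid_profile N Sig S \<longrightarrow> social_cost N Sopt \<le> social_cost N S)"

definition is_best_response ::
  "'p set \<Rightarrow> ('p \<Rightarrow> 'e set set) \<Rightarrow> ('p \<Rightarrow> 'e set) \<Rightarrow> 'p \<Rightarrow> 'e set \<Rightarrow> bool" where
  "is_best_response N Sig S i s \<longleftrightarrow> s \<in> Sig i \<and>
     (if (\<exists>s'\<in>Sig i. pcost N (S(i := s')) i < pcost N S i)
      then (\<forall>s'\<in>Sig i. pcost N (S(i := s)) i \<le> pcost N (S(i := s')) i)
      else s = S i)"

text \<open>A T-covering: states St 0, ..., St T and moving players mv 1, ..., mv T.\<close>
definition is_covering ::
  "'p set \<Rightarrow> ('p \<Rightarrow> 'e set set) \<Rightarrow> nat \<Rightarrow> (nat \<Rightarrow> 'p \<Rightarrow> 'e set) \<Rightarrow> (nat \<Rightarrow> 'p) \<Rightarrow> bool" where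
  "is_covering N Sig T St mv \<longleftrightarrow> valid_profile N Sig (St 0) \<and>
     (\<forall>t\<in>{1..T}. mv t \<in> N \<and>
        (\<exists>s. is_best_response N Sig (St (t - 1)) (mv t) s \<and> St t = (St (t - 1))(mv t := s))) \<and>
     (\<forall>i\<in>N. \<exists>t\<in>{1..T}. mv t = i)"

definition bounded_covering :: "'p set \<Rightarrow> nat \<Rightarrow> nat \<Rightarrow> (nat \<Rightarrow> 'p) \<Rightarrow> bool" where
  "bounded_covering N beta T mv \<longleftrightarrow> (\<forall>i\<in>N. card {t\<in>{1..T}. mv t = i} \<le> beta)"

definition last_move :: "nat \<Rightarrow> (nat \<Rightarrow> 'p) \<Rightarrow> 'p \<Rightarrow> nat" where
  "last_move T mv i = Max {t\<in>{1..T}. mv t = i}"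

definition rho ::
  "'p set \<Rightarrow> ('p \<Rightarrow> 'e set) \<Rightarrow> nat \<Rightarrow> (nat \<Rightarrow> 'p \<Rightarrow> 'e set) \<Rightarrow> (nat \<Rightarrow> 'p) \<Rightarrow> nat" where
  "rho N Sopt T St mv = (\<Sum>i\<in>N. \<Sum>e\<in>Sopt i. load N (St (last_move T mv i - 1)) e + 1)"

end

theory Submission
  imports Defs "HOL-Analysis.Convex"
begin

(* Write a e and b e for the loads of resource e in the
   optimum and in the initial state of R, and c e for the peak, over the states of R, of
   the number of players that have already moved in R and use e.  Every load occurring in
   R is at most b e + c e.  With K = Sum_e a e * (b e + c e + 1):
     (1)  rho(R) <= K, and each move of R costs the mover at most
          Sum_{e in Sopt(mover)} (b e + c e + 1), so all moves together cost <= beta K;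
     (2)  c e^2 <= 2 * (sum of the loads on e seen by the movers using e), by ordering the
          players counted in c e by their last move; summing, Sum_e c e^2 <= 2 beta K;
     (3)  Sum_e b e^2, the social cost at the end of the previous covering, is at most
          2 rho(previous covering): each player's final cost is charged to its cost at its
          last move and to the players moving after it.
   Cauchy-Schwarz bounds Sum_e a e b e and Sum_e a e c e in terms of OPT = Sum_e a e^2 and
   the quadratic quantities of (2) and (3); resolving the resulting quadratic inequality
   gives the claim. *)

subsection \<open>Counting identities\<close>

lemma card_filter_eq_sum:
  "finite N \<Longrightarrow> card {j\<in>N. P j} = (\<Sum>j\<in>N. if P j then 1 else 0)"
  by (simp add: sum.If_cases Int_def)

lemma sum_over_superset:
  assumes E: "finite E" and A: "A \<subseteq> E"
  shows "(\<Sum>e\<in>A. f e) = (\<Sum>e\<in>E. if e \<in> A then f e else 0)"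
proof -
  have "E \<inter> A = A" using A by blast
  then show ?thesis using sum.inter_restrict[OF E, of f A] by simp
qed

lemma sum_strategies_eq_sum_loads:
  fixes f :: "'e \<Rightarrow> 'a::comm_semiring_1"
  assumes N: "finite N" and E: "finite E" and sub: "\<forall>i\<in>N. S i \<subseteq> E"
  shows "(\<Sum>i\<in>N. \<Sum>e\<in>S i. f e) = (\<Sum>e\<in>E. of_nat (load N S e) * f e)"
proof -
  have "(\<Sum>i\<in>N. \<Sum>e\<in>S i. f e) = (\<Sum>i\<in>N. \<Sum>e\<in>E. if e \<in> S i then f e else 0)"
    using sub by (intro sum.cong refl sum_over_superset[OF E]) blast
  also have "\<dots> = (\<Sum>e\<in>E. \<Sum>i\<in>N. if e \<in> S i then f e else 0)"
    by (rule sum.swap)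
  also have "\<dots> = (\<Sum>e\<in>E. of_nat (load N S e) * f e)"
    using N by (intro sum.cong refl) (simp add: sum.If_cases Int_def load_def)
  finally show ?thesis .
qed

lemma social_cost_eq_sum_sq_loads:
  assumes "finite N" "finite E" "\<forall>i\<in>N. S i \<subseteq> E"
  shows "social_cost N S = (\<Sum>e\<in>E. (load N S e)^2)"
  using sum_strategies_eq_sum_loads[OF assms, of "load N S"]
  unfolding social_cost_def pcost_def by (simp add: power2_eq_square)

lemma social_cost_cong:
  assumes "\<forall>i\<in>N. S i = S' i"
  shows "social_cost N S = social_cost N S'"
proof -
  have "load N S e = load N S' e" for e
    unfolding load_def using assms by (intro arg_cong[where f = card] Collect_cong) auto
  then show ?thesis unfolding social_cost_def pcost_def using assms by simp
qed

lemma sum_card_filter_swap: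
  fixes A B :: "'p \<Rightarrow> 'e set"
  assumes N: "finite N" and A: "\<forall>i\<in>N. finite (A i)" and B: "\<forall>j\<in>N. finite (B j)"
  shows "(\<Sum>i\<in>N. \<Sum>e\<in>A i. card {j\<in>N. P i j \<and> e \<in> B j})
       = (\<Sum>j\<in>N. \<Sum>e\<in>B j. card {i\<in>N. P i j \<and> e \<in> A i})"
proof -
  have count: "(\<Sum>e\<in>X. card {j\<in>N. Q j \<and> e \<in> Y j})
      = (\<Sum>j\<in>N. if Q j then card (Y j \<inter> X) else 0)" if X: "finite X" for X :: "'e set" and Q Y
  proof -
    have "(\<Sum>e\<in>X. card {j\<in>N. Q j \<and> e \<in> Y j})
        = (\<Sum>e\<in>X. \<Sum>j\<in>N. if Q j \<and> e \<in> Y j then 1 else 0)"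
      using N by (simp add: card_filter_eq_sum)
    also have "\<dots> = (\<Sum>j\<in>N. \<Sum>e\<in>X. if Q j \<and> e \<in> Y j then 1 else 0)"
      by (rule sum.swap)
    also have "\<dots> = (\<Sum>j\<in>N. if Q j then card (Y j \<inter> X) else 0)"
      using X by (intro sum.cong refl) (auto simp: sum.If_cases intro: arg_cong[where f = card])
    finally show ?thesis .
  qed
  have "(\<Sum>i\<in>N. \<Sum>e\<in>A i. card {j\<in>N. P i j \<and> e \<in> B j})
      = (\<Sum>i\<in>N. \<Sum>j\<in>N. if P i j then card (B j \<inter> A i) else 0)"
    using A by (intro sum.cong refl count) auto
  also have "\<dots> = (\<Sum>j\<in>N. \<Sum>i\<in>N. if P i j then card (B j \<inter> A i) else 0)"
    by (rule sum.swap)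
  also have "\<dots> = (\<Sum>j\<in>N. \<Sum>i\<in>N. if P i j then card (A i \<inter> B j) else 0)"
    by (simp only: Int_commute[of "B _"])
  also have "\<dots> = (\<Sum>j\<in>N. \<Sum>e\<in>B j. card {i\<in>N. P i j \<and> e \<in> A i})"
    using B count[of "B j" "\<lambda>i. P i j" A for j] by (intro sum.cong refl) simp
  finally show ?thesis .
qed

text \<open>Every ordered pair (q, j) of H satisfies f q <= f j or f j <= f q, so at least half
  of the pairs satisfy f q <= f j.\<close>
lemma card_sq_le_twice_pairs_below:
  fixes f :: "'p \<Rightarrow> nat"
  assumes H: "finite H"
  shows "(card H)^2 \<le> 2 * (\<Sum>j\<in>H. card {q\<in>H. f q \<le> f j})"
proof -
  have "(card H)^2 = (\<Sum>j\<in>H. \<Sum>q\<in>H. (1::nat))" by (simp add: power2_eq_square)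
  also have "\<dots> \<le> (\<Sum>j\<in>H. \<Sum>q\<in>H. (if f q \<le> f j then 1 else 0) + (if f j \<le> f q then 1 else 0))"
    by (intro sum_mono) auto
  also have "\<dots> = (\<Sum>j\<in>H. \<Sum>q\<in>H. if f q \<le> f j then 1 else 0)
                 + (\<Sum>j\<in>H. \<Sum>q\<in>H. if f j \<le> f q then 1 else 0)"
    by (simp add: sum.distrib)
  also have "(\<Sum>j\<in>H. \<Sum>q\<in>H. if f j \<le> f q then 1 else (0::nat))
      = (\<Sum>q\<in>H. \<Sum>j\<in>H. if f j \<le> f q then 1 else 0)"
    by (rule sum.swap)
  finally show ?thesis using H by (simp add: card_filter_eq_sum)
qed

lemma sum_over_moves_le:
  fixes h :: "'p \<Rightarrow> nat"
  assumes N: "finite N" and mvN: "\<forall>\<tau>\<in>{1..T}. mv \<tau> \<in> N"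
    and bnd: "bounded_covering N beta T mv"
  shows "(\<Sum>\<tau>\<in>{1..T}. h (mv \<tau>)) \<le> beta * (\<Sum>j\<in>N. h j)"
proof -
  have "(\<Sum>\<tau>\<in>{1..T}. h (mv \<tau>)) = (\<Sum>\<tau>\<in>{1..T}. \<Sum>j\<in>N. if mv \<tau> = j then h j else 0)"
    using mvN N by (intro sum.cong refl) simp
  also have "\<dots> = (\<Sum>j\<in>N. \<Sum>\<tau>\<in>{1..T}. if mv \<tau> = j then h j else 0)" by (rule sum.swap)
  also have "\<dots> = (\<Sum>j\<in>N. card {\<tau>\<in>{1..T}. mv \<tau> = j} * h j)"
    by (intro sum.cong refl) (simp add: sum.If_cases Int_def)
  also have "\<dots> \<le> (\<Sum>j\<in>N. beta * h j)"
    using bnd unfolding bounded_covering_def by (intro sum_mono mult_right_mono) auto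
  finally show ?thesis by (simp add: sum_distrib_left)
qed

subsection \<open>Games, best responses and coverings\<close>

lemma game_finite:
  assumes "congestion_game N E Sig"
  shows "finite N" "finite E"
  using assms unfolding congestion_game_def by auto

lemma valid_profile_sub:
  assumes "congestion_game N E Sig" "valid_profile N Sig S"
  shows "\<forall>i\<in>N. S i \<subseteq> E"
  using assms unfolding congestion_game_def valid_profile_def by blast

lemma load_update_le: "finite N \<Longrightarrow> load N (S(i := x)) e \<le> load N S e + 1"
proof -
  assume N: "finite N"
  have "{j\<in>N. e \<in> (S(i := x)) j} \<subseteq> insert i {j\<in>N. e \<in> S j}" by auto
  then have "card {j\<in>N. e \<in> (S(i := x)) j} \<le> card (insert i {j\<in>N. e \<in> S j})"
    using N by (intro card_mono) auto
  also have "\<dots> \<le> card {j\<in>N. e \<in> S j} + 1" using N by (simp add: card_insert_if)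
  finally show ?thesis unfolding load_def .
qed

text \<open>A best response costs at most what any alternative strategy x would cost after
  deviating, which is at most the current loads on x plus one.\<close>
lemma best_response_cost_le:
  assumes N: "finite N" and x: "x \<in> Sig i" and br: "is_best_response N Sig S i s"
  shows "pcost N (S(i := s)) i \<le> (\<Sum>e\<in>x. load N S e + 1)"
proof -
  have "pcost N (S(i := s)) i \<le> pcost N (S(i := x)) i"
  proof (cases "\<exists>s'\<in>Sig i. pcost N (S(i := s')) i < pcost N S i")
    case True
    then show ?thesis using br x unfolding is_best_response_def by auto
  next
    case False
    then have "s = S i" using br unfolding is_best_response_def by auto
    then show ?thesis using False x by (auto simp: not_less)
  qed
  also have "\<dots> = (\<Sum>e\<in>x. load N (S(i := x)) e)" unfolding pcost_def by simp
  also have "\<dots> \<le> (\<Sum>e\<in>x. load N S e + 1)" by (intro sum_mono load_update_le N)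
  finally show ?thesis .
qed

lemma covering_step:
  assumes "is_covering N Sig T St mv" "t \<in> {1..T}"
  shows "mv t \<in> N" "\<exists>s. is_best_response N Sig (St (t - 1)) (mv t) s \<and> St t = (St (t - 1))(mv t := s)"
  using assms unfolding is_covering_def by blast+

lemma covering_move_cost_le:
  assumes cov: "is_covering N Sig T St mv" and N: "finite N"
    and opt: "valid_profile N Sig Sopt" and t: "t \<in> {1..T}"
  shows "pcost N (St t) (mv t) \<le> (\<Sum>e\<in>Sopt (mv t). load N (St (t - 1)) e + 1)"
proof -
  obtain s where st: "St t = (St (t - 1))(mv t := s)"
    and br: "is_best_response N Sig (St (t - 1)) (mv t) s"
    using covering_step(2)[OF cov t] by blast
  have "Sopt (mv t) \<in> Sig (mv t)"
    using opt covering_step(1)[OF cov t] unfolding valid_profile_def by blast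
  from best_response_cost_le[OF N this br] show ?thesis using st by simp
qed

lemma covering_states_valid:
  assumes cov: "is_covering N Sig T St mv"
  shows "t \<le> T \<Longrightarrow> valid_profile N Sig (St t)"
proof (induction t)
  case 0
  then show ?case using cov unfolding is_covering_def by blast
next
  case (Suc t)
  then have t: "Suc t \<in> {1..T}" by simp
  obtain s where "St (Suc t) = (St t)(mv (Suc t) := s)"
    and "is_best_response N Sig (St t) (mv (Suc t)) s"
    using covering_step(2)[OF cov t] by auto
  with Suc show ?case unfolding valid_profile_def is_best_response_def by auto
qed

lemma covering_strategy_unchanged:
  assumes cov: "is_covering N Sig T St mv"
  shows "b \<le> T \<Longrightarrow> a \<le> b \<Longrightarrow> \<forall>\<tau>. a < \<tau> \<and> \<tau> \<le> b \<longrightarrow> mv \<tau> \<noteq> j \<Longrightarrow> St b j = St a j"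
proof (induction b)
  case 0
  then show ?case by simp
next
  case (Suc b)
  show ?case
  proof (cases "a = Suc b")
    case False
    then have ab: "a \<le> b" using Suc.prems by simp
    obtain s where "St (Suc b) = (St b)(mv (Suc b) := s)"
      using covering_step(2)[OF cov, of "Suc b"] Suc.prems by auto
    moreover have "mv (Suc b) \<noteq> j" using Suc.prems ab by auto
    ultimately have "St (Suc b) j = St b j" by simp
    also have "\<dots> = St a j" using Suc.IH Suc.prems ab by simp
    finally show ?thesis .
  qed simp
qed

lemma last_move_props:
  assumes "\<exists>\<tau>\<in>{1..b}. mv \<tau> = j"
  shows "last_move b mv j \<in> {1..b}" "mv (last_move b mv j) = j"
    "\<And>\<tau>. last_move b mv j < \<tau> \<Longrightarrow> \<tau> \<le> b \<Longrightarrow> mv \<tau> \<noteq> j"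
proof -
  let ?A = "{\<tau>\<in>{1..b}. mv \<tau> = j}"
  have fin: "finite ?A" by simp
  have "Max ?A \<in> ?A" using assms by (intro Max_in fin) auto
  then show "last_move b mv j \<in> {1..b}" "mv (last_move b mv j) = j"
    unfolding last_move_def by auto
  fix \<tau> assume "last_move b mv j < \<tau>" "\<tau> \<le> b"
  moreover from this have "\<tau> \<notin> ?A"
    using Max_ge[OF fin] unfolding last_move_def by (meson not_le)
  ultimately show "mv \<tau> \<noteq> j" using \<open>Max ?A \<in> ?A\<close> unfolding last_move_def by auto
qed

lemma strategy_after_last_move:
  assumes cov: "is_covering N Sig T St mv" and b: "b \<le> T" and moved: "\<exists>\<tau>\<in>{1..b}. mv \<tau> = j"
    and t: "last_move b mv j \<le> t" "t \<le> b"
  shows "St t j = St b j"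
  using covering_strategy_unchanged[OF cov b] last_move_props(3)[OF moved] t by auto

lemma covering_last_move_props:
  assumes cov: "is_covering N Sig T St mv" and i: "i \<in> N"
  shows "last_move T mv i \<in> {1..T}" "mv (last_move T mv i) = i"
    "\<exists>\<tau>\<in>{1..T}. mv \<tau> = i"
proof -
  show moved: "\<exists>\<tau>\<in>{1..T}. mv \<tau> = i" using cov i unfolding is_covering_def by blast
  show "last_move T mv i \<in> {1..T}" "mv (last_move T mv i) = i"
    using last_move_props[OF moved] by blast+
qed

subsection \<open>The final state of a covering\<close>

text \<open>A user of e at the end either already used e when player i moved last, or moves
  after i.\<close>
lemma final_cost_le:
  assumes cov: "is_covering N Sig T St mv" and N: "finite N" and i: "i \<in> N"
  defines "lt \<equiv> last_move T mv"
  shows "pcost N (St T) i \<le> pcost N (St (lt i)) i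
           + (\<Sum>e\<in>St T i. card {j\<in>N. lt i < lt j \<and> e \<in> St T j})"
proof -
  have fixed: "St (lt i) j = St T j" if "j \<in> N" "lt j \<le> lt i" for j
    using strategy_after_last_move[OF cov order_refl] covering_last_move_props[OF cov] that i
    unfolding lt_def by (meson atLeastAtMost_iff)
  have "load N (St T) e \<le> load N (St (lt i)) e + card {j\<in>N. lt i < lt j \<and> e \<in> St T j}" for e
  proof -
    have "{j\<in>N. e \<in> St T j} \<subseteq> {j\<in>N. e \<in> St (lt i) j} \<union> {j\<in>N. lt i < lt j \<and> e \<in> St T j}"
      using fixed by force
    then have "load N (St T) e \<le> card ({j\<in>N. e \<in> St (lt i) j} \<union> {j\<in>N. lt i < lt j \<and> e \<in> St T j})"
      unfolding load_def using N by (intro card_mono) auto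
    also have "\<dots> \<le> load N (St (lt i)) e + card {j\<in>N. lt i < lt j \<and> e \<in> St T j}"
      unfolding load_def by (rule card_Un_le)
    finally show ?thesis .
  qed
  then have "pcost N (St T) i \<le> (\<Sum>e\<in>St T i. load N (St (lt i)) e + card {j\<in>N. lt i < lt j \<and> e \<in> St T j})"
    unfolding pcost_def by (rule sum_mono)
  also have "\<dots> = pcost N (St (lt i)) i + (\<Sum>e\<in>St T i. card {j\<in>N. lt i < lt j \<and> e \<in> St T j})"
    unfolding pcost_def using fixed[OF i] by (simp add: sum.distrib)
  finally show ?thesis .
qed

text \<open>Players whose last move precedes that of j still hold their final strategies when
  j moves last, so they are counted in j's cost at that step.\<close>
lemma earlier_movers_le_cost:
  assumes cov: "is_covering N Sig T St mv" and N: "finite N" and j: "j \<in> N"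
  defines "lt \<equiv> last_move T mv"
  shows "(\<Sum>e\<in>St T j. card {i\<in>N. lt i < lt j \<and> e \<in> St T i}) \<le> pcost N (St (lt j)) j"
proof -
  have fixed: "St (lt j) i = St T i" if "i \<in> N" "lt i \<le> lt j" for i
    using strategy_after_last_move[OF cov order_refl] covering_last_move_props[OF cov] that j
    unfolding lt_def by (meson atLeastAtMost_iff)
  have "card {i\<in>N. lt i < lt j \<and> e \<in> St T i} \<le> load N (St (lt j)) e" for e
  proof -
    have "{i\<in>N. lt i < lt j \<and> e \<in> St T i} \<subseteq> {i\<in>N. e \<in> St (lt j) i}"
      using fixed by auto
    then show ?thesis unfolding load_def using N by (intro card_mono) auto
  qed
  then have "(\<Sum>e\<in>St T j. card {i\<in>N. lt i < lt j \<and> e \<in> St T i}) \<le> (\<Sum>e\<in>St T j. load N (St (lt j)) e)"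
    by (rule sum_mono)
  also have "\<dots> = pcost N (St (lt j)) j" unfolding pcost_def using fixed[OF j] by simp
  finally show ?thesis .
qed

lemma final_social_cost_le:
  assumes game: "congestion_game N E Sig" and opt: "valid_profile N Sig Sopt"
    and cov: "is_covering N Sig T St mv"
  shows "social_cost N (St T) \<le> 2 * rho N Sopt T St mv"
proof -
  define lt where "lt = last_move T mv"
  have N: "finite N" using game_finite[OF game] by blast
  have fin: "\<forall>i\<in>N. finite (St T i)"
    using valid_profile_sub[OF game covering_states_valid[OF cov order_refl]] game_finite(2)[OF game]
    by (meson finite_subset)
  have last_cost: "pcost N (St (lt j)) j \<le> (\<Sum>e\<in>Sopt j. load N (St (lt j - 1)) e + 1)" if "j \<in> N" for j
    using covering_move_cost_le[OF cov N opt] covering_last_move_props[OF cov that] unfolding lt_def by metis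
  have "social_cost N (St T) \<le> (\<Sum>i\<in>N. pcost N (St (lt i)) i
          + (\<Sum>e\<in>St T i. card {j\<in>N. lt i < lt j \<and> e \<in> St T j}))"
    unfolding social_cost_def lt_def by (intro sum_mono final_cost_le[OF cov N])
  also have "\<dots> = (\<Sum>i\<in>N. pcost N (St (lt i)) i)
          + (\<Sum>j\<in>N. \<Sum>e\<in>St T j. card {i\<in>N. lt i < lt j \<and> e \<in> St T i})"
    using sum_card_filter_swap[OF N fin fin, of "\<lambda>i j. lt i < lt j"] by (simp add: sum.distrib)
  also have "\<dots> \<le> 2 * (\<Sum>j\<in>N. pcost N (St (lt j)) j)"
    using sum_mono[of N, OF earlier_movers_le_cost[OF cov N]] unfolding lt_def by simp
  also have "\<dots> \<le> 2 * rho N Sopt T St mv"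
    unfolding rho_def lt_def[symmetric] using sum_mono[of N, OF last_cost] by simp
  finally show ?thesis .
qed

subsection \<open>Loads during a covering\<close>

definition moved_users :: "'p set \<Rightarrow> (nat \<Rightarrow> 'p \<Rightarrow> 'e set) \<Rightarrow> (nat \<Rightarrow> 'p) \<Rightarrow> 'e \<Rightarrow> nat \<Rightarrow> nat" where
  "moved_users N St mv e t = card {j\<in>N. (\<exists>\<tau>\<in>{1..t}. mv \<tau> = j) \<and> e \<in> St t j}"

definition peak_moved_users ::
  "'p set \<Rightarrow> (nat \<Rightarrow> 'p \<Rightarrow> 'e set) \<Rightarrow> (nat \<Rightarrow> 'p) \<Rightarrow> nat \<Rightarrow> 'e \<Rightarrow> nat" where
  "peak_moved_users N St mv T e = Max (moved_users N St mv e ` {0..T})"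

text \<open>A user of e at step t either has not moved yet (and used e initially) or has moved.\<close>
lemma load_le_initial_plus_peak:
  assumes cov: "is_covering N Sig T St mv" and N: "finite N" and t: "t \<le> T"
  shows "load N (St t) e \<le> load N (St 0) e + peak_moved_users N St mv T e"
proof -
  have "{j\<in>N. e \<in> St t j}
      \<subseteq> {j\<in>N. e \<in> St 0 j} \<union> {j\<in>N. (\<exists>\<tau>\<in>{1..t}. mv \<tau> = j) \<and> e \<in> St t j}"
  proof (intro subsetI)
    fix j assume j: "j \<in> {j\<in>N. e \<in> St t j}"
    show "j \<in> {j\<in>N. e \<in> St 0 j} \<union> {j\<in>N. (\<exists>\<tau>\<in>{1..t}. mv \<tau> = j) \<and> e \<in> St t j}"
    proof (cases "\<exists>\<tau>\<in>{1..t}. mv \<tau> = j")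
      case False
      then have "St t j = St 0 j" by (intro covering_strategy_unchanged[OF cov t]) auto
      then show ?thesis using j by simp
    qed (use j in simp)
  qed
  then have "load N (St t) e
      \<le> card ({j\<in>N. e \<in> St 0 j} \<union> {j\<in>N. (\<exists>\<tau>\<in>{1..t}. mv \<tau> = j) \<and> e \<in> St t j})"
    unfolding load_def using N by (intro card_mono) auto
  also have "\<dots> \<le> load N (St 0) e + moved_users N St mv e t"
    unfolding load_def moved_users_def by (rule card_Un_le)
  also have "moved_users N St mv e t \<le> peak_moved_users N St mv T e"
    unfolding peak_moved_users_def using t by (intro Max_ge) auto
  finally show ?thesis by simp
qed

text \<open>Step (2) for a single resource: order the moved users of e at the peak step by their
  last moves; when the k-th of them moves last, at least k of them use e.\<close>
lemma peak_sq_le: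
  assumes cov: "is_covering N Sig T St mv" and N: "finite N"
  shows "(peak_moved_users N St mv T e)^2
           \<le> 2 * (\<Sum>\<tau>\<in>{1..T}. if e \<in> St \<tau> (mv \<tau>) then load N (St \<tau>) e else 0)"
proof -
  have "peak_moved_users N St mv T e \<in> moved_users N St mv e ` {0..T}"
    unfolding peak_moved_users_def by (intro Max_in) auto
  then obtain ts where ts: "ts \<le> T" and peak: "peak_moved_users N St mv T e = moved_users N St mv e ts"
    by auto
  define H where "H = {j\<in>N. (\<exists>\<tau>\<in>{1..ts}. mv \<tau> = j) \<and> e \<in> St ts j}"
  define lt where "lt = last_move ts mv"
  have moved: "\<exists>\<tau>\<in>{1..ts}. mv \<tau> = j" if "j \<in> H" for j using that unfolding H_def by blast
  have uses: "e \<in> St (lt j) q" if "j \<in> H" "q \<in> H" "lt q \<le> lt j" for j q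
  proof -
    have "lt j \<le> ts" using last_move_props(1)[OF moved[OF that(1)]] unfolding lt_def by simp
    then have "St (lt j) q = St ts q"
      using strategy_after_last_move[OF cov ts moved[OF that(2)]] that(3) unfolding lt_def by blast
    then show ?thesis using that(2) unfolding H_def by simp
  qed
  have below: "card {q\<in>H. lt q \<le> lt j} \<le> load N (St (lt j)) e" if "j \<in> H" for j
  proof -
    have "{q\<in>H. lt q \<le> lt j} \<subseteq> {q\<in>N. e \<in> St (lt j) q}"
      using uses[OF that] unfolding H_def by auto
    then show ?thesis unfolding load_def using N by (intro card_mono) auto
  qed
  have inj: "inj_on lt H"
    using last_move_props(2)[OF moved] unfolding lt_def by (metis inj_onI)
  have img: "lt ` H \<subseteq> {\<tau>\<in>{1..T}. e \<in> St \<tau> (mv \<tau>)}"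
    using last_move_props(1,2)[OF moved] uses ts unfolding lt_def by fastforce
  have "(peak_moved_users N St mv T e)^2 = (card H)^2"
    unfolding peak moved_users_def H_def ..
  also have "\<dots> \<le> 2 * (\<Sum>j\<in>H. card {q\<in>H. lt q \<le> lt j})"
    using N unfolding H_def by (intro card_sq_le_twice_pairs_below) simp
  also have "\<dots> \<le> 2 * (\<Sum>j\<in>H. load N (St (lt j)) e)"
    by (intro mult_left_mono sum_mono below) auto
  also have "(\<Sum>j\<in>H. load N (St (lt j)) e) = (\<Sum>\<tau>\<in>lt ` H. load N (St \<tau>) e)"
    by (simp add: sum.reindex[OF inj])
  also have "\<dots> \<le> (\<Sum>\<tau>\<in>{\<tau>\<in>{1..T}. e \<in> St \<tau> (mv \<tau>)}. load N (St \<tau>) e)"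
    by (rule sum_mono2[OF _ img]) auto
  also have "\<dots> = (\<Sum>\<tau>\<in>{1..T}. if e \<in> St \<tau> (mv \<tau>) then load N (St \<tau>) e else 0)"
    by (rule sum.inter_filter) simp
  finally show ?thesis by simp
qed

lemma rho_le_peak_bound:
  assumes cov: "is_covering N Sig T St mv" and N: "finite N"
  shows "rho N Sopt T St mv
           \<le> (\<Sum>j\<in>N. \<Sum>e\<in>Sopt j. load N (St 0) e + peak_moved_users N St mv T e + 1)"
  unfolding rho_def
proof (intro sum_mono)
  fix i e assume "i \<in> N"
  then have "last_move T mv i \<le> T" using covering_last_move_props(1)[OF cov] by simp
  then have "last_move T mv i - 1 \<le> T" by simp
  from load_le_initial_plus_peak[OF cov N this, of e]
  show "load N (St (last_move T mv i - 1)) e + 1 \<le> load N (St 0) e + peak_moved_users N St mv T e + 1"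
    by simp
qed

text \<open>Step (2): summing over resources, the squared peaks are bounded by twice the costs of
  all moves, each of which is bounded as in step (1), beta times per player.\<close>
lemma sum_peak_sq_le:
  assumes game: "congestion_game N E Sig" and opt: "valid_profile N Sig Sopt"
    and cov: "is_covering N Sig T St mv" and bnd: "bounded_covering N beta T mv"
  shows "(\<Sum>e\<in>E. (peak_moved_users N St mv T e)^2)
           \<le> 2 * beta * (\<Sum>j\<in>N. \<Sum>e\<in>Sopt j. load N (St 0) e + peak_moved_users N St mv T e + 1)"
proof -
  note N = game_finite(1)[OF game] and E = game_finite(2)[OF game]
  let ?w = "\<lambda>e. load N (St 0) e + peak_moved_users N St mv T e + 1"
  have mvN: "\<forall>\<tau>\<in>{1..T}. mv \<tau> \<in> N" using covering_step(1)[OF cov] by blast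
  have move_cost: "(\<Sum>e\<in>E. if e \<in> St \<tau> (mv \<tau>) then load N (St \<tau>) e else 0) = pcost N (St \<tau>) (mv \<tau>)"
    if "\<tau> \<in> {1..T}" for \<tau>
  proof -
    have "St \<tau> (mv \<tau>) \<subseteq> E"
      using valid_profile_sub[OF game covering_states_valid[OF cov]] mvN that by auto
    then show ?thesis unfolding pcost_def by (rule sum_over_superset[OF E, symmetric])
  qed
  have move_bound: "pcost N (St \<tau>) (mv \<tau>) \<le> (\<Sum>e\<in>Sopt (mv \<tau>). ?w e)" if "\<tau> \<in> {1..T}" for \<tau>
  proof -
    have "pcost N (St \<tau>) (mv \<tau>) \<le> (\<Sum>e\<in>Sopt (mv \<tau>). load N (St (\<tau> - 1)) e + 1)"
      by (rule covering_move_cost_le[OF cov N opt that])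
    also have "\<dots> \<le> (\<Sum>e\<in>Sopt (mv \<tau>). ?w e)"
      using load_le_initial_plus_peak[OF cov N, of "\<tau> - 1"] that by (intro sum_mono) auto
    finally show ?thesis .
  qed
  have "(\<Sum>e\<in>E. (peak_moved_users N St mv T e)^2)
      \<le> (\<Sum>e\<in>E. 2 * (\<Sum>\<tau>\<in>{1..T}. if e \<in> St \<tau> (mv \<tau>) then load N (St \<tau>) e else 0))"
    by (intro sum_mono peak_sq_le[OF cov N])
  also have "\<dots> = 2 * (\<Sum>\<tau>\<in>{1..T}. \<Sum>e\<in>E. if e \<in> St \<tau> (mv \<tau>) then load N (St \<tau>) e else 0)"
    by (simp add: sum_distrib_left[symmetric] sum.swap[of _ E])
  also have "\<dots> = 2 * (\<Sum>\<tau>\<in>{1..T}. pcost N (St \<tau>) (mv \<tau>))"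
    using move_cost by simp
  also have "\<dots> \<le> 2 * (\<Sum>\<tau>\<in>{1..T}. \<Sum>e\<in>Sopt (mv \<tau>). ?w e)"
    using move_bound by (intro mult_left_mono sum_mono) auto
  also have "\<dots> \<le> 2 * (beta * (\<Sum>j\<in>N. \<Sum>e\<in>Sopt j. ?w e))"
    by (intro mult_left_mono sum_over_moves_le[OF N mvN bnd]) simp
  finally show ?thesis by (simp add: mult.assoc)
qed

subsection \<open>The arithmetic conclusion\<close>

lemma quadratic_bound:
  fixes q w u s :: real
  assumes w: "0 \<le> w" and u: "0 < u" and s: "1 \<le> s" and sq: "q^2 \<le> 2 * s * u * (w + q + u)"
  shows "q \<le> w + 4 * s * u"
proof (rule ccontr)
  define v where "v = 2 * s * u"
  have v0: "0 \<le> v" using u s unfolding v_def by simp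
  have v: "u \<le> 2 * v" using u s unfolding v_def by (simp add: mult_left_mono)
  assume "\<not> q \<le> w + 4 * s * u"
  then have big: "w + 2 * v < q" unfolding v_def by simp
  have "(w + 2 * v) * (w + v) < q * (q - v)"
    using big w v0 by (intro mult_strict_mono') auto
  moreover have "v * (w + u) \<le> (w + 2 * v) * (w + v)"
  proof -
    have "v * u \<le> v * (2 * v)" using v v0 by (rule mult_left_mono)
    moreover have "0 \<le> w * w + 2 * v * w" using w v0 by simp
    ultimately show ?thesis by (simp add: algebra_simps)
  qed
  moreover have "q * (q - v) \<le> v * (w + u)"
    using sq unfolding v_def by (simp add: algebra_simps power2_eq_square)
  ultimately show False by linarith
qed

text \<open>The conclusion in terms of the load vectors a (optimum), b (initial) and c (peaks):
  by Cauchy-Schwarz, Sum a b <= sqrt(OPT * 2 rb) and Sum a c <= sqrt(OPT * Sum c^2), while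
  Sum a <= OPT; the quadratic bound then resolves the self-reference through c.\<close>
lemma load_vector_bound:
  fixes a b c :: "'e \<Rightarrow> nat" and E :: "'e set" and r rb beta :: nat
  defines "opt \<equiv> \<Sum>e\<in>E. (a e)^2" and "K \<equiv> \<Sum>e\<in>E. a e * (b e + c e + 1)"
  assumes opt_pos: "0 < opt" and beta: "1 \<le> beta"
    and r: "r \<le> K" and c: "(\<Sum>e\<in>E. (c e)^2) \<le> 2 * beta * K"
    and b: "(\<Sum>e\<in>E. (b e)^2) \<le> 2 * rb"
  shows "real r / real opt \<le> 2 * sqrt (2 * (real rb / real opt)) + 4 * real beta + 1"
proof -
  define u where "u = real opt"
  define p where "p = (\<Sum>e\<in>E. real (a e) * real (b e))"
  define q where "q = (\<Sum>e\<in>E. real (a e) * real (c e))"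
  define w where "w = sqrt (2 * real rb * u)"
  have u: "0 < u" unfolding u_def using opt_pos by simp
  have u_sq: "u = (\<Sum>e\<in>E. (real (a e))^2)" unfolding u_def opt_def by simp
  have w: "0 \<le> w" unfolding w_def using u by simp
  have K: "real K = p + q + (\<Sum>e\<in>E. real (a e))"
    unfolding K_def p_def q_def by (simp add: algebra_simps sum.distrib)
  have a_le: "(\<Sum>e\<in>E. real (a e)) \<le> u"
    unfolding u_sq by (intro sum_mono) (metis le_square of_nat_le_iff of_nat_mult power2_eq_square)
  have b_real: "(\<Sum>e\<in>E. (real (b e))^2) \<le> 2 * real rb"
    using of_nat_mono[OF b] by simp
  have c_real: "(\<Sum>e\<in>E. (real (c e))^2) \<le> 2 * real beta * real K"
    using of_nat_mono[OF c] by simp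
  have p_le: "p \<le> w"
  proof (rule power2_le_imp_le)
    have "p^2 \<le> u * (\<Sum>e\<in>E. (real (b e))^2)"
      unfolding p_def u_sq by (rule Cauchy_Schwarz_ineq_sum)
    also have "\<dots> \<le> u * (2 * real rb)"
      using b_real u by (intro mult_left_mono) auto
    finally show "p^2 \<le> w^2" unfolding w_def using u by (simp add: algebra_simps)
  qed (rule w)
  have q_le: "q \<le> w + 4 * real beta * u"
  proof (rule quadratic_bound[OF w u])
    have "q^2 \<le> u * (\<Sum>e\<in>E. (real (c e))^2)"
      unfolding q_def u_sq by (rule Cauchy_Schwarz_ineq_sum)
    also have "\<dots> \<le> u * (2 * real beta * (w + q + u))"
    proof (rule mult_left_mono)
      have "real K \<le> w + q + u" using K a_le p_le by simp
      then have "2 * real beta * real K \<le> 2 * real beta * (w + q + u)"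
        by (intro mult_left_mono) auto
      then show "(\<Sum>e\<in>E. (real (c e))^2) \<le> 2 * real beta * (w + q + u)"
        using c_real by linarith
    qed (use u in simp)
    finally show "q^2 \<le> 2 * real beta * u * (w + q + u)" by (simp add: algebra_simps)
  qed (use beta in simp)
  have "real r \<le> 2 * w + (4 * real beta + 1) * u"
    using of_nat_mono[OF r] K a_le p_le q_le by (simp add: algebra_simps)
  then have "real r / u \<le> 2 * (w / u) + 4 * real beta + 1"
    using u by (simp add: field_simps)
  also have "w / u = sqrt (2 * (real rb / u))"
  proof -
    have "2 * real rb * u = 2 * (real rb / u) * u^2" using u by (simp add: power2_eq_square)
    then have "w = sqrt (2 * (real rb / u)) * sqrt (u^2)"
      unfolding w_def by (simp only: real_sqrt_mult)
    then show ?thesis using u by simp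
  qed
  finally show ?thesis unfolding u_def .
qed

theorem lemma4:
  fixes N :: "'p set" and E :: "'e set" and Sig :: "'p \<Rightarrow> 'e set set"
    and Sopt :: "'p \<Rightarrow> 'e set" and beta T :: nat
    and Stb St :: "nat \<Rightarrow> 'p \<Rightarrow> 'e set" and mvb mv :: "nat \<Rightarrow> 'p"
  assumes game: "congestion_game N E Sig"
    and opt: "optimal_profile N Sig Sopt"
    and opt_pos: "social_cost N Sopt > 0"
    and beta: "beta \<ge> 1"
    and covb: "is_covering N Sig T Stb mvb" and bndb: "bounded_covering N beta T mvb"
    and cov: "is_covering N Sig T St mv" and bnd: "bounded_covering N beta T mv"
    and consec: "\<forall>i\<in>N. St 0 i = Stb T i"
  shows "real (rho N Sopt T St mv) / real (social_cost N Sopt)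
           \<le> 2 * sqrt (2 * (real (rho N Sopt T Stb mvb) / real (social_cost N Sopt)))
             + 4 * real beta + 1"
proof -
  note N = game_finite(1)[OF game] and E = game_finite(2)[OF game]
  have optv: "valid_profile N Sig Sopt" using opt unfolding optimal_profile_def by blast
  have opt_sub: "\<forall>i\<in>N. Sopt i \<subseteq> E" by (rule valid_profile_sub[OF game optv])
  have start_sub: "\<forall>i\<in>N. St 0 i \<subseteq> E"
    using valid_profile_sub[OF game covering_states_valid[OF cov]] by simp
  define c where "c = peak_moved_users N St mv T"
  have K: "(\<Sum>j\<in>N. \<Sum>e\<in>Sopt j. load N (St 0) e + c e + 1)
           = (\<Sum>e\<in>E. load N Sopt e * (load N (St 0) e + c e + 1))"
    using sum_strategies_eq_sum_loads[OF N E opt_sub, of "\<lambda>e. load N (St 0) e + c e + 1"]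
    by (simp only: of_nat_id)
  have opt_cost: "social_cost N Sopt = (\<Sum>e\<in>E. (load N Sopt e)^2)"
    by (rule social_cost_eq_sum_sq_loads[OF N E opt_sub])
  have rho_bound: "rho N Sopt T St mv \<le> (\<Sum>e\<in>E. load N Sopt e * (load N (St 0) e + c e + 1))"
    using rho_le_peak_bound[OF cov N, of Sopt] unfolding c_def[symmetric] K .
  have peak_bound: "(\<Sum>e\<in>E. (c e)^2)
      \<le> 2 * beta * (\<Sum>e\<in>E. load N Sopt e * (load N (St 0) e + c e + 1))"
    using sum_peak_sq_le[OF game optv cov bnd] unfolding c_def[symmetric] K .
  have start_cost: "(\<Sum>e\<in>E. (load N (St 0) e)^2) \<le> 2 * rho N Sopt T Stb mvb"
  proof -
    have "social_cost N (St 0) = social_cost N (Stb T)"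
      using consec by (rule social_cost_cong)
    then show ?thesis using final_social_cost_le[OF game optv covb]
      social_cost_eq_sum_sq_loads[OF N E start_sub] by simp
  qed
  have "0 < (\<Sum>e\<in>E. (load N Sopt e)^2)" using opt_pos unfolding opt_cost .
  from load_vector_bound[OF this beta rho_bound peak_bound start_cost]
  show ?thesis unfolding opt_cost .
qed

end
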